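(* Let $X=(X^{(1)},\dots,X^{(p)})\in\mathbb{R}^p$ be a random vector and $Y\in\mathbb{R}$ a random variable, with finite second moments. Suppose there is a directed acyclic graph $G$ with vertex set $\{X^{(1)},\dots,X^{(p)},Y\}$ in which $Y$ has no children, such that the distribution of $(X,Y)$ is linearly $Y$-faithful to $G$. Then the distribution of $(X,Y)$ is partially faithful.
   Context: $\rho(Z^{(1)},Z^{(2)}\mid W)$ denotes the population partial correlation. For $\mathcal{S}\subseteq\{1,\dots,p\}$, $X^{(\mathcal{S})}=\{X^{(j)};j\in\mathcal{S}\}$ and $\{j\}^C=\{1,\dots,p\}\setminus\{j\}$. In a DAG, a path between two vertices is blocked by a set $W$ of vertices (not containing the endpoints) if it contains a non-collider in $W$, or a collider (a vertex with both adjacent path edges pointing into it) such that neither it nor any of its descendants is in $W$; two vertices are d-separated by $W$ if every path between them is blocked by $W$. The distribution of $(X,Y)$ is linearly $Y$-faithful to $G$ if for all $j\in\{1,\dots,p\}$ and $\mathcal{S}\subseteq\{j\}^C$: $X^{(j)}$ and $Y$ are d-separated by $X^{(\mathcal{S})}$ in $G$ if and only if $\rho(X^{(j)},Y\mid X^{(\mathcal{S})})=0$. The distribution of $(X,Y)$ is partially faithful if for every $j$: if $\rho(Y,X^{(j)}\mid X^{(\mathcal{S})})=0$ for some $\mathcal{S}\subseteq\{j\}^C$, then $\rho(Y,X^{(j)}\mid X^{(\{j\}^C)})=0$. *)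

theory Defs
  imports "HOL-Probability.Probability"
begin

text \<open>The best linear predictor (with intercept) of Z from W_S is characterised by the
  normal equations: the residual has mean zero and is orthogonal to every W j, j in S.\<close>

definition lin_proj_coeffs ::
  "'a measure \<Rightarrow> ('a \<Rightarrow> real) \<Rightarrow> nat set \<Rightarrow> (nat \<Rightarrow> 'a \<Rightarrow> real) \<Rightarrow> real \<Rightarrow> (nat \<Rightarrow> real) \<Rightarrow> bool"
  where "lin_proj_coeffs M Z S W a b \<longleftrightarrow>
    (let e = (\<lambda>\<omega>. Z \<omega> - a - (\<Sum>j\<in>S. b j * W j \<omega>)) in
      (\<integral>\<omega>. e \<omega> \<partial>M) = 0 \<and> (\<forall>j\<in>S. (\<integral>\<omega>. e \<omega> * W j \<omega> \<partial>M) = 0))"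

definition lin_resid ::
  "'a measure \<Rightarrow> ('a \<Rightarrow> real) \<Rightarrow> nat set \<Rightarrow> (nat \<Rightarrow> 'a \<Rightarrow> real) \<Rightarrow> 'a \<Rightarrow> real"
  where "lin_resid M Z S W =
    (let ab = (SOME ab. lin_proj_coeffs M Z S W (fst ab) (snd ab))
     in (\<lambda>\<omega>. Z \<omega> - fst ab - (\<Sum>j\<in>S. snd ab j * W j \<omega>)))"

text \<open>Partial correlation rho(Z1, Z2 | W_S): correlation of the residuals
  (which have mean zero).  Division by zero yields 0 (Isabelle convention).\<close>
definition pcorr ::
  "'a measure \<Rightarrow> ('a \<Rightarrow> real) \<Rightarrow> ('a \<Rightarrow> real) \<Rightarrow> nat set \<Rightarrow> (nat \<Rightarrow> 'a \<Rightarrow> real) \<Rightarrow> real"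
  where "pcorr M Z1 Z2 S W =
    (let e1 = lin_resid M Z1 S W; e2 = lin_resid M Z2 S W in
      (\<integral>\<omega>. e1 \<omega> * e2 \<omega> \<partial>M) /
        sqrt ((\<integral>\<omega>. (e1 \<omega>)\<^sup>2 \<partial>M) * (\<integral>\<omega>. (e2 \<omega>)\<^sup>2 \<partial>M)))"

definition is_DAG :: "'v set \<Rightarrow> ('v \<times> 'v) set \<Rightarrow> bool"
  where "is_DAG V E \<longleftrightarrow> finite V \<and> E \<subseteq> V \<times> V \<and> acyclic E"

definition is_path :: "('v \<times> 'v) set \<Rightarrow> 'v list \<Rightarrow> 'v \<Rightarrow> 'v \<Rightarrow> bool"
  where "is_path E xs a b \<longleftrightarrow> 2 \<le> length xs \<and> hd xs = a \<and> last xs = b \<and> distinct xs \<and>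
    (\<forall>i. Suc i < length xs \<longrightarrow> (xs!i, xs!Suc i) \<in> E \<or> (xs!Suc i, xs!i) \<in> E)"

definition collider_at :: "('v \<times> 'v) set \<Rightarrow> 'v list \<Rightarrow> nat \<Rightarrow> bool"
  where "collider_at E xs k \<longleftrightarrow> (xs!(k - 1), xs!k) \<in> E \<and> (xs!Suc k, xs!k) \<in> E"

definition blocked :: "('v \<times> 'v) set \<Rightarrow> 'v set \<Rightarrow> 'v list \<Rightarrow> bool"
  where "blocked E W xs \<longleftrightarrow> (\<exists>k. 0 < k \<and> Suc k < length xs \<and>
     ((\<not> collider_at E xs k \<and> xs!k \<in> W) \<or>
      (collider_at E xs k \<and> (\<forall>u. (xs!k, u) \<in> E\<^sup>* \<longrightarrow> u \<notin> W))))"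

definition d_separated :: "('v \<times> 'v) set \<Rightarrow> 'v \<Rightarrow> 'v \<Rightarrow> 'v set \<Rightarrow> bool"
  where "d_separated E a b W \<longleftrightarrow> (\<forall>xs. is_path E xs a b \<longrightarrow> blocked E W xs)"

text \<open>Vertices: Some j stands for X^(j) (1 \<le> j \<le> p), None stands for Y.\<close>

definition lin_Y_faithful ::
  "'a measure \<Rightarrow> (nat \<Rightarrow> 'a \<Rightarrow> real) \<Rightarrow> ('a \<Rightarrow> real) \<Rightarrow> nat \<Rightarrow> (nat option \<times> nat option) set \<Rightarrow> bool"
  where "lin_Y_faithful M X Y p E \<longleftrightarrow>
    (\<forall>j\<in>{1..p}. \<forall>S. S \<subseteq> {1..p} - {j} \<longrightarrow>
       (d_separated E (Some j) None (Some ` S) \<longleftrightarrow> pcorr M (X j) Y S X = 0))"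

definition partially_faithful ::
  "'a measure \<Rightarrow> (nat \<Rightarrow> 'a \<Rightarrow> real) \<Rightarrow> ('a \<Rightarrow> real) \<Rightarrow> nat \<Rightarrow> bool"
  where "partially_faithful M X Y p \<longleftrightarrow>
    (\<forall>j\<in>{1..p}. (\<exists>S. S \<subseteq> {1..p} - {j} \<and> pcorr M Y (X j) S X = 0) \<longrightarrow>
       pcorr M Y (X j) ({1..p} - {j}) X = 0)"

end

theory Submission
  imports Defs
begin

text \<open>A path of two vertices has no interior vertex and so is never blocked; hence a
  d-separated pair is non-adjacent.  Conversely, since Y has no children, a longer path
  from X^(j) to Y reaches Y through an edge into Y, so its penultimate vertex is a
  non-collider, which the full set of other covariates blocks.  Thus d-separation from Y
  by some S forces d-separation by the full set, and linear Y-faithfulness translates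
  this into the corresponding statement about partial correlations.\<close>

lemma pcorr_commute: "pcorr M A B S W = pcorr M B A S W"
  unfolding pcorr_def Let_def by (simp add: mult.commute)

lemma d_separated_imp_not_adjacent:
  assumes "d_separated E a b W" and "a \<noteq> b"
  shows "(a, b) \<notin> E"
proof
  assume "(a, b) \<in> E"
  then have "is_path E [a, b] a b"
    using \<open>a \<noteq> b\<close> unfolding is_path_def by (auto simp: less_Suc_eq)
  then have "blocked E W [a, b]"
    using assms(1) unfolding d_separated_def by blast
  then show False
    unfolding blocked_def by auto
qed

lemma d_separated_from_sink:
  assumes sink: "\<forall>v. (b, v) \<notin> E" and E_V: "E \<subseteq> V \<times> V"
    and W: "V - {a, b} \<subseteq> W" and no_edge: "(a, b) \<notin> E"
  shows "d_separated E a b W"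
  unfolding d_separated_def
proof (intro allI impI)
  fix xs assume path: "is_path E xs a b"
  then have ne: "xs \<noteq> []"
    unfolding is_path_def by auto
  with path have dist: "distinct xs" and first: "xs ! 0 = a" and last_b: "xs ! (length xs - 1) = b"
    unfolding is_path_def by (auto simp: hd_conv_nth last_conv_nth)
  define k where "k = length xs - 2"
  have "length xs \<noteq> 2"
  proof
    assume "length xs = 2"
    then have "(xs ! 0, xs ! Suc 0) \<in> E \<or> (xs ! Suc 0, xs ! 0) \<in> E" and "xs ! Suc 0 = b"
      using path last_b unfolding is_path_def by auto
    then have "(a, b) \<in> E \<or> (b, a) \<in> E"
      using first by simp
    then show False using no_edge sink by blast
  qed
  then have k: "0 < k" "Suc k = length xs - 1" "Suc k < length xs"
    using path unfolding is_path_def k_def by auto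
  have penult_b: "xs ! Suc k = b"
    using k(2) last_b by simp
  have "(xs ! k, xs ! Suc k) \<in> E \<or> (xs ! Suc k, xs ! k) \<in> E"
    using path k unfolding is_path_def by blast
  then have "xs ! k \<in> V"
    using E_V sink penult_b by auto
  moreover have "xs ! k \<noteq> xs ! 0" "xs ! k \<noteq> xs ! Suc k"
    using ne k(1,3) nth_eq_iff_index_eq[OF dist, of k 0] nth_eq_iff_index_eq[OF dist, of k "Suc k"]
    by auto
  ultimately have "xs ! k \<in> W"
    using W first penult_b by blast
  moreover have "\<not> collider_at E xs k"
    using sink penult_b unfolding collider_at_def by simp
  ultimately show "blocked E W xs"
    using k unfolding blocked_def by blast
qed

theorem theorem2:
  fixes M :: "'a measure" and X :: "nat \<Rightarrow> 'a \<Rightarrow> real" and Y :: "'a \<Rightarrow> real"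
    and p :: nat and E :: "(nat option \<times> nat option) set"
  assumes "prob_space M"
    and "\<forall>j\<in>{1..p}. X j \<in> borel_measurable M \<and> integrable M (\<lambda>\<omega>. (X j \<omega>)\<^sup>2)"
    and "Y \<in> borel_measurable M" and "integrable M (\<lambda>\<omega>. (Y \<omega>)\<^sup>2)"
    and "is_DAG (Some ` {1..p} \<union> {None}) E"
    and "\<forall>v. (None, v) \<notin> E"
    and "lin_Y_faithful M X Y p E"
  shows "partially_faithful M X Y p"
  unfolding partially_faithful_def
proof (intro ballI impI)
  fix j assume j: "j \<in> {1..p}"
  assume "\<exists>S. S \<subseteq> {1..p} - {j} \<and> pcorr M Y (X j) S X = 0"
  then obtain S where "S \<subseteq> {1..p} - {j}" "pcorr M (X j) Y S X = 0"
    using pcorr_commute by metis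
  then have "d_separated E (Some j) None (Some ` S)"
    using assms(7) j unfolding lin_Y_faithful_def by blast
  then have "(Some j, None) \<notin> E"
    by (rule d_separated_imp_not_adjacent) simp
  moreover have "E \<subseteq> (Some ` {1..p} \<union> {None}) \<times> (Some ` {1..p} \<union> {None})"
    using assms(5) unfolding is_DAG_def by blast
  moreover have "(Some ` {1..p} \<union> {None}) - {Some j, None} \<subseteq> Some ` ({1..p} - {j})"
    by auto
  ultimately have "d_separated E (Some j) None (Some ` ({1..p} - {j}))"
    by (intro d_separated_from_sink[OF assms(6)])
  then have "pcorr M (X j) Y ({1..p} - {j}) X = 0"
    using assms(7) j unfolding lin_Y_faithful_def by blast
  then show "pcorr M Y (X j) ({1..p} - {j}) X = 0"
    using pcorr_commute by metis
qed

end
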